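(* Let $w\ge1$, $T\ge2\ln2$, and suppose $\alpha_2^2\le\frac{\ln w}{4}$, $\alpha_1\sqrt w\ge\ln w$, and $\frac{\ln w}{\alpha_2}\le\frac{\sqrt w\,\alpha_1}{\beta}$. If the solution of the guided probability flow ODE satisfies $\tilde x(e^{-T})\ge-\frac{\sqrt w\,\alpha_1}{16\beta}$ (i.e. $x(0)\ge -\frac{\sqrt w\,\alpha_1}{16\beta}$), then there exists a time $s_0\in[e^{-T},1]$ with $$\tilde x(s_0)\ge\frac{\ln w}{16\alpha_2}.$$
   Context: Let $0<\alpha_1<\alpha_2$ and $\beta\ge1$. Let $p^{(1)}$ and $p^{(-1)}$ be probability densities on $\mathbb R$ supported on $[\alpha_1,\alpha_2]$ and $[-\alpha_2,-\alpha_1]$ respectively, which are $\beta$-bounded with respect to each other: $\frac1\beta\le \frac{p^{(-1)}(x_1)}{p^{(1)}(x_2)}\le\beta$ for all $x_1\in(-\alpha_2,-\alpha_1)$, $x_2\in(\alpha_1,\alpha_2)$. Let $p=\frac12p^{(1)}+\frac12p^{(-1)}$, and let $(X_0,z)$ be jointly distributed with $z$ uniform on $\{\pm1\}$ and $X_0\mid z\sim p^{(z)}$. Fix $T>0$; for $t\in[0,T]$ put $a_t=e^{t-T}$, $b_t=\sqrt{1-a_t^2}$, and $X_t=a_tX_0+\xi_t$ with $\xi_t\sim\mathcal N(0,b_t^2)$ independent of $(X_0,z)$. Let $p_t$ denote the density of $X_t$ and $p_t(\cdot\mid z=\pm1)$ the conditional density of $X_t$ given $z=\pm1$. For a guidance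 parameter $w\ge0$, the guided probability flow ODE is $x'(t)=x(t)+(w+1)\nabla\log p_t(x(t)\mid z=1)-w\nabla\log p_t(x(t))$, $t\in[0,T)$. Time is reparametrized by $s=a_t=e^{t-T}\in[e^{-T},1]$, $\tilde x(s)=x(T+\ln s)$. *)

theory Defs
  imports "HOL-Probability.Probability"
begin

definition prob_density :: "(real \<Rightarrow> real) \<Rightarrow> bool" where
  "prob_density f \<longleftrightarrow> f \<in> borel_measurable lborel \<and> (\<forall>x. 0 \<le> f x)
     \<and> (\<integral>\<^sup>+ x. ennreal (f x) \<partial>lborel) = 1"

definition sched_a :: "real \<Rightarrow> real \<Rightarrow> real" where
  "sched_a T t = exp (t - T)"

definition sched_b :: "real \<Rightarrow> real \<Rightarrow> real" where
  "sched_b T t = sqrt (1 - (sched_a T t)\<^sup>2)"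

text \<open>Density of X_t = a_t X_0 + xi_t when X_0 has density q and xi_t ~ N(0, b_t^2)
  independent of X_0 (conditional density p_t(. | z) when q = p^(z)).\<close>
definition noised_density :: "(real \<Rightarrow> real) \<Rightarrow> real \<Rightarrow> real \<Rightarrow> real \<Rightarrow> real" where
  "noised_density q T t x =
     (\<integral> y. q y * normal_density 0 (sched_b T t) (x - sched_a T t * y) \<partial>lborel)"

definition marginal_density ::
  "(real \<Rightarrow> real) \<Rightarrow> (real \<Rightarrow> real) \<Rightarrow> real \<Rightarrow> real \<Rightarrow> real \<Rightarrow> real" where
  "marginal_density p1 pm1 T t x =
     1/2 * noised_density p1 T t x + 1/2 * noised_density pm1 T t x"

definition guided_field ::
  "(real \<Rightarrow> real) \<Rightarrow> (real \<Rightarrow> real) \<Rightarrow> real \<Rightarrow> real \<Rightarrow> real \<Rightarrow> real \<Rightarrow> real" where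
  "guided_field p1 pm1 w T t x =
     x + (w + 1) * deriv (\<lambda>y. ln (noised_density p1 T t y)) x
       - w * deriv (\<lambda>y. ln (marginal_density p1 pm1 T t y)) x"

end

theory Submission
  imports Defs
begin

text \<open>
  Suppose the trajectory stays below \<open>L = ln w / (16 \<alpha>2)\<close>. Writing the noised densities as
  Gaussian convolutions, the score of class 1 at \<open>x\<close> is at least \<open>(a \<alpha>1 - x) / b\<^sup>2\<close> and that
  of class -1 at most \<open>(- a \<alpha>1 - x) / b\<^sup>2\<close>, and the guided field is \<open>x\<close> plus the first score
  plus \<open>w\<close> times the score gap weighted by the posterior probability of class -1. While
  \<open>x \<le> L\<close> and \<open>a \<le> 1/2\<close>, Gaussian kernel values at mirrored points of the two supports differ by
  a factor at most \<open>w powr (1/4)\<close>, so that posterior is at least \<open>w powr (-1/4) / 2\<close> and the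
  field is at least \<open>a K\<close> with \<open>K = \<alpha>1 + w powr (3/4) * \<alpha>1 - L / 2\<close>. On \<open>[0, T - ln 2]\<close> the
  factor \<open>a\<close> rises from \<open>exp (- T) \<le> 1/4\<close> to \<open>1/2\<close>, so \<open>x\<close> gains at least \<open>K / 4\<close>, which the
  parameter constraints make larger than the distance from \<open>x 0\<close> to \<open>L\<close>.
\<close>

lemma second_order_remainder_bound:
  fixes f f' f'' :: "real \<Rightarrow> real"
  assumes f: "\<And>u. (f has_real_derivative f' u) (at u)"
    and f': "\<And>u. (f' has_real_derivative f'' u) (at u)"
    and bound: "\<And>u. \<bar>f'' u\<bar> \<le> M"
  shows "\<bar>f (u + h) - f u - h * f' u\<bar> \<le> M / 2 * h\<^sup>2"
proof (cases "h = 0")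
  case False
  define diff where "diff m = (if m = 0 then f else if m = 1 then f' else f'')" for m :: nat
  obtain s where "f (u + h) = (\<Sum>m<2. diff m u / fact m * h ^ m) + diff 2 s / fact 2 * h\<^sup>2"
    using Taylor[of 2 diff f "min u (u + h)" "max u (u + h)" u "u + h"] False f f'
    by (force simp: diff_def less_2_cases_iff)
  then have "f (u + h) - f u - h * f' u = f'' s / 2 * h\<^sup>2"
    by (simp add: diff_def eval_nat_numeral)
  also have "\<bar>\<dots>\<bar> \<le> M / 2 * h\<^sup>2"
    using bound[of s] by (simp add: abs_mult mult_right_mono)
  finally show ?thesis .
qed simp

lemma has_real_derivative_of_quadratic_remainder:
  fixes f :: "real \<Rightarrow> real"
  assumes "\<And>h. \<bar>f (z + h) - f z - h * D\<bar> \<le> C * h\<^sup>2"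
  shows "(f has_real_derivative D) (at z)"
proof -
  have "((\<lambda>y. (f y - f z) / (y - z) - D) \<longlongrightarrow> 0) (at z)"
  proof (rule Lim_null_comparison)
    show "\<forall>\<^sub>F y in at z. norm ((f y - f z) / (y - z) - D) \<le> C * \<bar>y - z\<bar>"
      unfolding eventually_at_filter
    proof (intro always_eventually allI impI)
      fix y assume "y \<noteq> z"
      then have "(f y - f z) / (y - z) - D = (f (z + (y - z)) - f z - (y - z) * D) / (y - z)"
        by (simp add: field_simps)
      also have "\<bar>\<dots>\<bar> \<le> C * (y - z)\<^sup>2 / \<bar>y - z\<bar>"
        unfolding abs_divide by (rule divide_right_mono[OF assms abs_ge_zero])
      also have "\<dots> = C * \<bar>y - z\<bar> * \<bar>y - z\<bar> / \<bar>y - z\<bar>"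
        by (simp add: power2_eq_square mult.assoc)
      also have "\<dots> = C * \<bar>y - z\<bar>"
        using \<open>y \<noteq> z\<close> by simp
      finally show "norm ((f y - f z) / (y - z) - D) \<le> C * \<bar>y - z\<bar>" by simp
    qed
    show "((\<lambda>y. C * \<bar>y - z\<bar>) \<longlongrightarrow> 0) (at z)"
      by (rule tendsto_eq_intros refl)+ simp
  qed
  then have "((\<lambda>y. (f y - f z) / (y - z)) \<longlongrightarrow> D) (at z)"
    by (rule LIM_zero_cancel)
  then show ?thesis
    by (simp add: has_field_derivative_iff)
qed

lemma integrable_mult_bounded:
  fixes q f :: "real \<Rightarrow> real"
  assumes q: "integrable lborel q" and f: "f \<in> borel_measurable borel"
    and bound: "\<And>y. \<bar>f y\<bar> \<le> B"
  shows "integrable lborel (\<lambda>y. q y * f y)"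
proof (rule Bochner_Integration.integrable_bound)
  show "integrable lborel (\<lambda>y. B * q y)" using q by simp
  show "AE y in lborel. norm (q y * f y) \<le> norm (B * q y)"
  proof (rule AE_I2)
    fix y
    have "\<bar>f y\<bar> \<le> \<bar>B\<bar>"
      using bound[of y] by linarith
    from mult_left_mono[OF this abs_ge_zero[of "q y"]]
    show "norm (q y * f y) \<le> norm (B * q y)"
      by (simp add: abs_mult mult.commute)
  qed
  show "(\<lambda>y. q y * f y) \<in> borel_measurable lborel"
    using q f by measurable
qed

lemma has_real_derivative_integral_translates:
  fixes q \<phi> \<phi>' \<phi>'' :: "real \<Rightarrow> real"
  assumes q: "integrable lborel q"
    and \<phi>: "\<And>u. (\<phi> has_real_derivative \<phi>' u) (at u)"
    and \<phi>': "\<And>u. (\<phi>' has_real_derivative \<phi>'' u) (at u)"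
    and bounds: "\<And>u. \<bar>\<phi> u\<bar> \<le> B0" "\<And>u. \<bar>\<phi>' u\<bar> \<le> B1" "\<And>u. \<bar>\<phi>'' u\<bar> \<le> B2"
  shows "((\<lambda>z. \<integral>y. q y * \<phi> (z - a * y) \<partial>lborel) has_real_derivative
           (\<integral>y. q y * \<phi>' (z - a * y) \<partial>lborel)) (at z)"
proof (rule has_real_derivative_of_quadratic_remainder)
  fix h
  have [measurable]: "\<phi> \<in> borel_measurable borel" "\<phi>' \<in> borel_measurable borel"
    using \<phi> \<phi>' by (auto intro!: borel_measurable_continuous_onI continuous_at_imp_continuous_on
        DERIV_isCont)
  have int: "integrable lborel (\<lambda>y. q y * \<phi> (c - a * y))"
    "integrable lborel (\<lambda>y. q y * \<phi>' (c - a * y))" for c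
    by (rule integrable_mult_bounded[OF q _ bounds(1)] integrable_mult_bounded[OF q _ bounds(2)];
        measurable)+
  define r where "r u = \<phi> (u + h) - \<phi> u - h * \<phi>' u" for u
  have r_eq: "(\<lambda>y. q y * r (z - a * y)) = (\<lambda>y. q y * \<phi> (z + h - a * y) - q y * \<phi> (z - a * y)
      - h * (q y * \<phi>' (z - a * y)))"
    by (simp add: fun_eq_iff r_def algebra_simps)
  have int_r: "integrable lborel (\<lambda>y. q y * r (z - a * y))"
    unfolding r_eq by (intro Bochner_Integration.integrable_diff integrable_mult_right int)
  have "(\<integral>y. q y * \<phi> (z + h - a * y) \<partial>lborel) - (\<integral>y. q y * \<phi> (z - a * y) \<partial>lborel)
      - h * (\<integral>y. q y * \<phi>' (z - a * y) \<partial>lborel) = (\<integral>y. q y * r (z - a * y) \<partial>lborel)"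
    unfolding r_eq by (simp add: int)
  also have "\<bar>\<dots>\<bar> \<le> (\<integral>y. B2 / 2 * h\<^sup>2 * \<bar>q y\<bar> \<partial>lborel)"
  proof (rule integral_abs_bound_integral)
    show "integrable lborel (\<lambda>y. q y * r (z - a * y))"
      by (rule int_r)
    show "integrable lborel (\<lambda>y. B2 / 2 * h\<^sup>2 * \<bar>q y\<bar>)"
      using q by simp
    show "\<bar>q y * r (z - a * y)\<bar> \<le> B2 / 2 * h\<^sup>2 * \<bar>q y\<bar>" for y
    proof -
      have "\<bar>r (z - a * y)\<bar> \<le> B2 / 2 * h\<^sup>2"
        unfolding r_def by (rule second_order_remainder_bound[OF \<phi> \<phi>' bounds(3)])
      from mult_left_mono[OF this abs_ge_zero[of "q y"]] show ?thesis
        by (simp add: abs_mult mult.commute)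
    qed
  qed
  also have "\<dots> = B2 / 2 * (\<integral>y. \<bar>q y\<bar> \<partial>lborel) * h\<^sup>2"
    by simp
  finally show "\<bar>(\<integral>y. q y * \<phi> (z + h - a * y) \<partial>lborel) - (\<integral>y. q y * \<phi> (z - a * y) \<partial>lborel)
      - h * (\<integral>y. q y * \<phi>' (z - a * y) \<partial>lborel)\<bar> \<le> B2 / 2 * (\<integral>y. \<bar>q y\<bar> \<partial>lborel) * h\<^sup>2" .
qed

lemma has_real_derivative_normal_density:
  assumes "0 < \<sigma>"
  shows "(normal_density 0 \<sigma> has_real_derivative - u / \<sigma>\<^sup>2 * normal_density 0 \<sigma> u) (at u)"
  unfolding normal_density_def[abs_def] using assms
  by (auto intro!: derivative_eq_intros simp: field_simps power2_eq_square)

lemma has_real_derivative_normal_density_deriv: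
  assumes "0 < \<sigma>"
  shows "((\<lambda>u. - u / \<sigma>\<^sup>2 * normal_density 0 \<sigma> u) has_real_derivative
           (u\<^sup>2 / \<sigma>\<^sup>2 - 1) / \<sigma>\<^sup>2 * normal_density 0 \<sigma> u) (at u)"
  using assms
  by (auto intro!: derivative_eq_intros has_real_derivative_normal_density
      simp: field_simps power2_eq_square)

lemma normal_density_ratio_ge:
  assumes "0 < \<sigma>" and "u'\<^sup>2 \<le> u\<^sup>2 + 2 * \<sigma>\<^sup>2 * k"
  shows "exp (- k) * normal_density 0 \<sigma> u \<le> normal_density 0 \<sigma> u'"
proof -
  have "u'\<^sup>2 / (2 * \<sigma>\<^sup>2) \<le> (u\<^sup>2 + 2 * \<sigma>\<^sup>2 * k) / (2 * \<sigma>\<^sup>2)"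
    using assms by (intro divide_right_mono) auto
  also have "\<dots> = u\<^sup>2 / (2 * \<sigma>\<^sup>2) + k"
    using assms by (simp add: field_simps)
  finally have "- k - u\<^sup>2 / (2 * \<sigma>\<^sup>2) \<le> - u'\<^sup>2 / (2 * \<sigma>\<^sup>2)"
    by simp
  then have "exp (- k) * exp (- u\<^sup>2 / (2 * \<sigma>\<^sup>2)) \<le> exp (- u'\<^sup>2 / (2 * \<sigma>\<^sup>2))"
    by (simp flip: exp_add)
  then show ?thesis
    unfolding normal_density_def by (simp add: mult.left_commute divide_right_mono)
qed

lemma square_mult_exp_le:
  fixes u v :: real
  assumes "0 < v"
  shows "u\<^sup>2 * exp (- u\<^sup>2 / (2 * v)) \<le> 2 * v"
proof -
  have "u\<^sup>2 / (2 * v) \<le> exp (u\<^sup>2 / (2 * v))"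
    using exp_ge_add_one_self[of "u\<^sup>2 / (2 * v)"] by linarith
  then show ?thesis
    using assms by (simp add: exp_minus field_simps)
qed

lemma normal_density_derivatives_bounded:
  assumes "0 < \<sigma>"
  shows "\<bar>normal_density 0 \<sigma> u\<bar> \<le> 1 / sqrt (2 * pi * \<sigma>\<^sup>2)"
    and "\<bar>- u / \<sigma>\<^sup>2 * normal_density 0 \<sigma> u\<bar> \<le> 1 / sqrt (2 * pi * \<sigma>\<^sup>2) * (1 + 2 * \<sigma>\<^sup>2) / \<sigma>\<^sup>2"
    and "\<bar>(u\<^sup>2 / \<sigma>\<^sup>2 - 1) / \<sigma>\<^sup>2 * normal_density 0 \<sigma> u\<bar> \<le> 1 / sqrt (2 * pi * \<sigma>\<^sup>2) * 3 / \<sigma>\<^sup>2"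
proof -
  define c where "c = 1 / sqrt (2 * pi * \<sigma>\<^sup>2)"
  define E where "E = exp (- u\<^sup>2 / (2 * \<sigma>\<^sup>2))"
  have \<phi>: "normal_density 0 \<sigma> u = c * E"
    by (simp add: normal_density_def c_def E_def)
  have c: "0 \<le> c" and E: "0 \<le> E" "E \<le> 1" and \<sigma>2: "0 < \<sigma>\<^sup>2"
    using assms by (auto simp: c_def E_def)
  have uE: "u\<^sup>2 * E \<le> 2 * \<sigma>\<^sup>2"
    unfolding E_def using \<sigma>2 by (rule square_mult_exp_le)
  have "\<bar>u\<bar> \<le> 1 + u\<^sup>2"
  proof (cases "\<bar>u\<bar> \<le> 1")
    case False
    then have "\<bar>u\<bar> * 1 \<le> \<bar>u\<bar> * \<bar>u\<bar>"
      by (intro mult_left_mono) auto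
    then show ?thesis
      by (simp add: power2_eq_square)
  qed (simp add: add_increasing2)
  then have uE': "\<bar>u\<bar> * E \<le> 1 + 2 * \<sigma>\<^sup>2"
    using E uE mult_right_mono[of "\<bar>u\<bar>" "1 + u\<^sup>2" E] by (simp add: algebra_simps)
  have "\<bar>u\<^sup>2 / \<sigma>\<^sup>2 - 1\<bar> * E \<le> (u\<^sup>2 / \<sigma>\<^sup>2 + 1) * E"
    using E \<sigma>2 by (intro mult_right_mono) (auto simp: abs_le_iff)
  also have "\<dots> = u\<^sup>2 * E / \<sigma>\<^sup>2 + E"
    by (simp add: algebra_simps)
  also have "\<dots> \<le> 2 + 1"
    using uE E \<sigma>2 by (intro add_mono) (auto simp: field_simps)
  finally have uE'': "\<bar>u\<^sup>2 / \<sigma>\<^sup>2 - 1\<bar> * E \<le> 3"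
    by simp
  show "\<bar>normal_density 0 \<sigma> u\<bar> \<le> c"
    unfolding \<phi> using mult_left_mono[OF E(2) c] c E by simp
  have "\<bar>- u / \<sigma>\<^sup>2 * normal_density 0 \<sigma> u\<bar> = c * (\<bar>u\<bar> * E) / \<sigma>\<^sup>2"
    unfolding \<phi> using c E \<sigma>2 by (simp add: abs_mult abs_divide field_simps)
  also have "\<dots> \<le> c * (1 + 2 * \<sigma>\<^sup>2) / \<sigma>\<^sup>2"
    using \<sigma>2 by (intro divide_right_mono mult_left_mono uE' c) auto
  finally show "\<bar>- u / \<sigma>\<^sup>2 * normal_density 0 \<sigma> u\<bar> \<le> c * (1 + 2 * \<sigma>\<^sup>2) / \<sigma>\<^sup>2" .
  have "\<bar>(u\<^sup>2 / \<sigma>\<^sup>2 - 1) / \<sigma>\<^sup>2 * normal_density 0 \<sigma> u\<bar> = c * (\<bar>u\<^sup>2 / \<sigma>\<^sup>2 - 1\<bar> * E) / \<sigma>\<^sup>2"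
    unfolding \<phi> using c E \<sigma>2 by (simp add: abs_mult abs_divide)
  also have "\<dots> \<le> c * 3 / \<sigma>\<^sup>2"
    using \<sigma>2 by (intro divide_right_mono mult_left_mono uE'' c) auto
  finally show "\<bar>(u\<^sup>2 / \<sigma>\<^sup>2 - 1) / \<sigma>\<^sup>2 * normal_density 0 \<sigma> u\<bar> \<le> c * 3 / \<sigma>\<^sup>2" .
qed

lemma prob_densityD:
  assumes "prob_density q"
  shows "integrable lborel q" and "(\<integral>y. q y \<partial>lborel) = 1" and "0 \<le> q y"
proof -
  have m: "q \<in> borel_measurable lborel" and nn: "\<And>y. 0 \<le> q y"
    and one: "(\<integral>\<^sup>+ y. ennreal (q y) \<partial>lborel) = 1"
    using assms unfolding prob_density_def by auto
  show "integrable lborel q"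
    using m nn one by (intro integrableI_nonneg) auto
  show "(\<integral>y. q y \<partial>lborel) = 1"
    using m nn one by (subst integral_eq_nn_integral) auto
  show "0 \<le> q y"
    by (rule nn)
qed

lemma integral_mono_on_support:
  fixes q f g :: "real \<Rightarrow> real"
  assumes "\<And>y. 0 \<le> q y"
    and "integrable lborel (\<lambda>y. q y * f y)" "integrable lborel (\<lambda>y. q y * g y)"
    and "\<And>y. q y \<noteq> 0 \<Longrightarrow> f y \<le> g y"
  shows "(\<integral>y. q y * f y \<partial>lborel) \<le> (\<integral>y. q y * g y \<partial>lborel)"
proof (rule integral_mono[OF assms(2,3)])
  show "q y * f y \<le> q y * g y" for y
    using assms(1,4)[of y] by (cases "q y = 0") (auto intro: mult_left_mono)
qed

lemma integral_le_across_supports: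
  fixes q q' f g :: "real \<Rightarrow> real"
  assumes q: "prob_density q" and q': "prob_density q'"
    and int_f: "integrable lborel (\<lambda>y. q y * f y)" and int_g: "integrable lborel (\<lambda>y. q' y * g y)"
    and le: "\<And>y y'. q y \<noteq> 0 \<Longrightarrow> q' y' \<noteq> 0 \<Longrightarrow> f y \<le> g y'"
  shows "(\<integral>y. q y * f y \<partial>lborel) \<le> (\<integral>y. q' y * g y \<partial>lborel)"
proof -
  define G where "G = (\<integral>y. q' y * g y \<partial>lborel)"
  have "f y \<le> G" if "q y \<noteq> 0" for y
  proof -
    have "(\<integral>y'. q' y' * f y \<partial>lborel) \<le> G"
      unfolding G_def
      by (rule integral_mono_on_support[where f="\<lambda>_. f y", OF prob_densityD(3)[OF q']
            integrable_mult_left[OF prob_densityD(1)[OF q']] int_g le[OF that]])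
    then show ?thesis
      using prob_densityD(2)[OF q'] by simp
  qed
  then have "(\<integral>y. q y * f y \<partial>lborel) \<le> (\<integral>y. q y * G \<partial>lborel)"
    by (rule integral_mono_on_support[OF prob_densityD(3)[OF q] int_f
          integrable_mult_left[OF prob_densityD(1)[OF q]]])
  also have "\<dots> = G"
    using prob_densityD(2)[OF q] by simp
  finally show ?thesis
    unfolding G_def .
qed

definition gauss_conv :: "(real \<Rightarrow> real) \<Rightarrow> real \<Rightarrow> real \<Rightarrow> real \<Rightarrow> real" where
  "gauss_conv q \<sigma> a z = (\<integral>y. q y * normal_density 0 \<sigma> (z - a * y) \<partial>lborel)"

lemma noised_density_eq_gauss_conv:
  "noised_density q T t = gauss_conv q (sched_b T t) (sched_a T t)"
  by (simp add: fun_eq_iff noised_density_def gauss_conv_def)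

lemma integrable_gauss_kernel:
  assumes "integrable lborel q" and "0 < \<sigma>"
  shows "integrable lborel (\<lambda>y. q y * normal_density 0 \<sigma> (z - a * y))"
    and "integrable lborel (\<lambda>y. q y * (k * normal_density 0 \<sigma> (z - a * y)))"
    and "integrable lborel (\<lambda>y. q y * (- (z - a * y) / \<sigma>\<^sup>2 * normal_density 0 \<sigma> (z - a * y)))"
proof -
  show int: "integrable lborel (\<lambda>y. q y * normal_density 0 \<sigma> (z - a * y))"
    by (rule integrable_mult_bounded[OF assms(1) _ normal_density_derivatives_bounded(1)[OF assms(2)]])
      measurable
  have "(\<lambda>y. q y * (k * normal_density 0 \<sigma> (z - a * y))) = (\<lambda>y. k * (q y * normal_density 0 \<sigma> (z - a * y)))"
    by (simp add: fun_eq_iff ac_simps)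
  then show "integrable lborel (\<lambda>y. q y * (k * normal_density 0 \<sigma> (z - a * y)))"
    using integrable_mult_right[OF int, of k] by simp
  show "integrable lborel (\<lambda>y. q y * (- (z - a * y) / \<sigma>\<^sup>2 * normal_density 0 \<sigma> (z - a * y)))"
    by (rule integrable_mult_bounded[OF assms(1) _ normal_density_derivatives_bounded(2)[OF assms(2)]])
      measurable
qed

lemma gauss_conv_const_mult:
  "(\<integral>y. q y * (k * normal_density 0 \<sigma> (z - a * y)) \<partial>lborel) = k * gauss_conv q \<sigma> a z"
  unfolding gauss_conv_def integral_mult_right_zero[symmetric]
  by (rule Bochner_Integration.integral_cong) simp_all

lemma has_real_derivative_gauss_conv:
  assumes "integrable lborel q" and "0 < \<sigma>"
  shows "(gauss_conv q \<sigma> a has_real_derivative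
           (\<integral>y. q y * (- (z - a * y) / \<sigma>\<^sup>2 * normal_density 0 \<sigma> (z - a * y)) \<partial>lborel)) (at z)"
  unfolding gauss_conv_def[abs_def]
  by (rule has_real_derivative_integral_translates[OF assms(1)
        has_real_derivative_normal_density[OF assms(2)]
        has_real_derivative_normal_density_deriv[OF assms(2)]
        normal_density_derivatives_bounded[OF assms(2)]])

lemma gauss_conv_pos:
  assumes q: "prob_density q" and supp: "\<forall>y. y \<notin> {c..d} \<longrightarrow> q y = 0" and \<sigma>: "0 < \<sigma>"
  shows "0 < gauss_conv q \<sigma> a z"
proof -
  define R where "R = \<bar>z\<bar> + \<bar>a\<bar> * (\<bar>c\<bar> + \<bar>d\<bar>)"
  have kernel_ge: "normal_density 0 \<sigma> R \<le> normal_density 0 \<sigma> (z - a * y)" if "q y \<noteq> 0" for y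
  proof -
    have "c \<le> y" "y \<le> d"
      using supp that by auto
    then have "\<bar>y\<bar> \<le> \<bar>c\<bar> + \<bar>d\<bar>"
      using abs_ge_self[of d] abs_ge_minus_self[of c] abs_ge_zero[of c] abs_ge_zero[of d]
      unfolding abs_le_iff by linarith
    then have "\<bar>a * y\<bar> \<le> \<bar>a\<bar> * (\<bar>c\<bar> + \<bar>d\<bar>)"
      by (simp add: abs_mult mult_left_mono)
    then have "\<bar>z - a * y\<bar> \<le> R"
      unfolding R_def using abs_triangle_ineq4[of z "a * y"] by linarith
    then have "(z - a * y)\<^sup>2 \<le> R\<^sup>2 + 2 * \<sigma>\<^sup>2 * 0"
      using power_mono[OF _ abs_ge_zero, of "z - a * y" R 2] by simp
    from normal_density_ratio_ge[OF \<sigma> this] show ?thesis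
      by simp
  qed
  have "0 < normal_density 0 \<sigma> R"
    using \<sigma> by (rule normal_density_pos)
  also have "\<dots> = (\<integral>y. q y * normal_density 0 \<sigma> R \<partial>lborel)"
    using prob_densityD(2)[OF q] by simp
  also have "\<dots> \<le> gauss_conv q \<sigma> a z"
    unfolding gauss_conv_def
    by (rule integral_mono_on_support[OF prob_densityD(3)[OF q]
          integrable_mult_left[OF prob_densityD(1)[OF q]]
          integrable_gauss_kernel(1)[OF prob_densityD(1)[OF q] \<sigma>] kernel_ge])
  finally show ?thesis .
qed

lemma deriv_gauss_conv_bounds:
  assumes q: "prob_density q" and supp: "\<forall>y. y \<notin> {c..d} \<longrightarrow> q y = 0"
    and \<sigma>: "0 < \<sigma>" and a: "0 \<le> a"
  shows "(a * c - z) / \<sigma>\<^sup>2 * gauss_conv q \<sigma> a z \<le> deriv (gauss_conv q \<sigma> a) z"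
    and "deriv (gauss_conv q \<sigma> a) z \<le> (a * d - z) / \<sigma>\<^sup>2 * gauss_conv q \<sigma> a z"
proof -
  note int = integrable_gauss_kernel[OF prob_densityD(1)[OF q] \<sigma>]
  have deriv: "deriv (gauss_conv q \<sigma> a) z
      = (\<integral>y. q y * (- (z - a * y) / \<sigma>\<^sup>2 * normal_density 0 \<sigma> (z - a * y)) \<partial>lborel)"
    by (rule DERIV_imp_deriv[OF has_real_derivative_gauss_conv[OF prob_densityD(1)[OF q] \<sigma>]])
  have slope: "(a * c - z) / \<sigma>\<^sup>2 \<le> - (z - a * y) / \<sigma>\<^sup>2" "- (z - a * y) / \<sigma>\<^sup>2 \<le> (a * d - z) / \<sigma>\<^sup>2"
    if "q y \<noteq> 0" for y
  proof -
    have "c \<le> y" "y \<le> d"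
      using supp that by auto
    then have "a * c \<le> a * y" "a * y \<le> a * d"
      using a by (simp_all add: mult_left_mono)
    then show "(a * c - z) / \<sigma>\<^sup>2 \<le> - (z - a * y) / \<sigma>\<^sup>2" "- (z - a * y) / \<sigma>\<^sup>2 \<le> (a * d - z) / \<sigma>\<^sup>2"
      by (simp_all add: divide_right_mono)
  qed
  show "(a * c - z) / \<sigma>\<^sup>2 * gauss_conv q \<sigma> a z \<le> deriv (gauss_conv q \<sigma> a) z"
    unfolding deriv gauss_conv_const_mult[symmetric]
    by (rule integral_mono_on_support[OF prob_densityD(3)[OF q] int(2,3)])
      (use slope(1) normal_density_nonneg in \<open>blast intro: mult_right_mono\<close>)
  show "deriv (gauss_conv q \<sigma> a) z \<le> (a * d - z) / \<sigma>\<^sup>2 * gauss_conv q \<sigma> a z"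
    unfolding deriv gauss_conv_const_mult[symmetric]
    by (rule integral_mono_on_support[OF prob_densityD(3)[OF q] int(3,2)])
      (use slope(2) normal_density_nonneg in \<open>blast intro: mult_right_mono\<close>)
qed

lemma gauss_conv_mirror_ratio_ge:
  assumes p: "prob_density p" and supp: "\<forall>y. y \<notin> {\<alpha>1..\<alpha>2} \<longrightarrow> p y = 0"
    and p': "prob_density p'" and supp': "\<forall>y. y \<notin> {-\<alpha>2..-\<alpha>1} \<longrightarrow> p' y = 0"
    and \<alpha>1: "0 \<le> \<alpha>1" and \<sigma>: "0 < \<sigma>" and a: "0 \<le> a" and z: "z \<le> L" and L: "0 \<le> L"
  shows "exp (- (a * \<alpha>2 * (2 * L + a * \<alpha>2) / \<sigma>\<^sup>2)) * gauss_conv p \<sigma> a z \<le> gauss_conv p' \<sigma> a z"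
proof -
  define k where "k = a * \<alpha>2 * (2 * L + a * \<alpha>2) / \<sigma>\<^sup>2"
  have kernel: "exp (- k) * normal_density 0 \<sigma> (z - a * y) \<le> normal_density 0 \<sigma> (z - a * y')"
    if "p y \<noteq> 0" "p' y' \<noteq> 0" for y y'
  proof (rule normal_density_ratio_ge[OF \<sigma>])
    have y: "\<alpha>1 \<le> y" "y \<le> \<alpha>2" and y': "-\<alpha>2 \<le> y'" "y' \<le> -\<alpha>1"
      using supp supp' that by auto
    have "(z - a * y')\<^sup>2 - (z - a * y)\<^sup>2 = a * (y - y') * (2 * z - a * (y + y'))"
      by (simp add: power2_eq_square algebra_simps)
    also have "\<dots> \<le> a * (2 * \<alpha>2) * (2 * L + a * \<alpha>2)"
    proof (cases "2 * z - a * (y + y') \<le> 0")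
      case True
      have "a * (y - y') * (2 * z - a * (y + y')) \<le> 0"
        using True a y y' \<alpha>1 by (intro mult_nonneg_nonpos) auto
      moreover have "0 \<le> a * (2 * \<alpha>2) * (2 * L + a * \<alpha>2)"
        using a y \<alpha>1 L by simp
      ultimately show ?thesis
        by linarith
    next
      case False
      have "a * (- (y + y')) \<le> a * \<alpha>2"
        using a y y' \<alpha>1 by (intro mult_left_mono) auto
      then have "2 * z - a * (y + y') \<le> 2 * L + a * \<alpha>2"
        using z by (simp add: algebra_simps)
      moreover have "a * (y - y') \<le> a * (2 * \<alpha>2)"
        using a y y' by (intro mult_left_mono) auto
      ultimately show ?thesis
        using False a y y' \<alpha>1 by (intro mult_mono) auto
    qed
    also have "\<dots> = 2 * \<sigma>\<^sup>2 * k"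
      unfolding k_def using \<sigma> by (simp add: field_simps)
    finally show "(z - a * y')\<^sup>2 \<le> (z - a * y)\<^sup>2 + 2 * \<sigma>\<^sup>2 * k"
      by simp
  qed
  have "exp (- k) * gauss_conv p \<sigma> a z
      = (\<integral>y. p y * (exp (- k) * normal_density 0 \<sigma> (z - a * y)) \<partial>lborel)"
    by (rule gauss_conv_const_mult[symmetric])
  also have "\<dots> \<le> gauss_conv p' \<sigma> a z"
    unfolding gauss_conv_def
    by (rule integral_le_across_supports[OF p p'
          integrable_gauss_kernel(2)[OF prob_densityD(1)[OF p] \<sigma>]
          integrable_gauss_kernel(1)[OF prob_densityD(1)[OF p'] \<sigma>] kernel])
  finally show ?thesis
    unfolding k_def .
qed

text \<open>\<open>Nm / (N1 + Nm)\<close> is the posterior probability of class \<open>-1\<close> at \<open>z\<close>.\<close>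

lemma guided_field_eq_posterior_form:
  fixes p1 pm1 :: "real \<Rightarrow> real" and T t z :: real
  defines "N1 \<equiv> noised_density p1 T t z" and "Nm \<equiv> noised_density pm1 T t z"
  assumes d1: "(noised_density p1 T t has_real_derivative D1) (at z)"
    and dm: "(noised_density pm1 T t has_real_derivative Dm) (at z)"
    and N1: "0 < N1" and Nm: "0 < Nm"
  shows "guided_field p1 pm1 w T t z = z + D1 / N1 + w * (D1 / N1 - Dm / Nm) * (Nm / (N1 + Nm))"
proof -
  have "((\<lambda>y. ln (noised_density p1 T t y)) has_real_derivative 1 / N1 * D1) (at z)"
    using DERIV_chain2[OF DERIV_ln_divide[OF N1[unfolded N1_def]] d1] unfolding N1_def .
  then have score1: "deriv (\<lambda>y. ln (noised_density p1 T t y)) z = D1 / N1"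
    by (simp add: DERIV_imp_deriv)
  have "(marginal_density p1 pm1 T t has_real_derivative 1/2 * D1 + 1/2 * Dm) (at z)"
    unfolding marginal_density_def[abs_def] by (intro DERIV_add DERIV_cmult d1 dm)
  moreover have "0 < marginal_density p1 pm1 T t z"
    using N1 Nm by (simp add: marginal_density_def N1_def Nm_def)
  ultimately have "((\<lambda>y. ln (marginal_density p1 pm1 T t y)) has_real_derivative
      1 / marginal_density p1 pm1 T t z * (1/2 * D1 + 1/2 * Dm)) (at z)"
    by (intro DERIV_chain2[OF DERIV_ln_divide])
  then have score: "deriv (\<lambda>y. ln (marginal_density p1 pm1 T t y)) z = (D1 + Dm) / (N1 + Nm)"
    using N1 Nm by (simp add: DERIV_imp_deriv marginal_density_def N1_def Nm_def field_simps)
  have posterior: "D1 / N1 - (D1 + Dm) / (N1 + Nm) = (D1 / N1 - Dm / Nm) * (Nm / (N1 + Nm))"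
  proof -
    have "N1 + Nm \<noteq> 0"
      using N1 Nm by simp
    then show ?thesis
      using N1 Nm by (simp add: divide_simps) (simp add: algebra_simps)
  qed
  have "guided_field p1 pm1 w T t z = z + D1 / N1 + w * (D1 / N1 - (D1 + Dm) / (N1 + Nm))"
    unfolding guided_field_def score1 score by (simp add: algebra_simps add_divide_distrib)
  then show ?thesis
    unfolding posterior by (simp add: mult.assoc)
qed

lemma guided_drift_ge_of_score_bounds:
  fixes a v \<alpha>1 w \<rho> z r1 rm N1 Nm :: real
  assumes a: "0 < a" and v: "v = 1 - a\<^sup>2" "0 < v" and \<alpha>1: "0 \<le> \<alpha>1" and w: "0 \<le> w"
    and N: "0 < N1" "0 < Nm" and \<rho>: "0 \<le> \<rho>" "\<rho> \<le> 1" "\<rho> * N1 \<le> Nm"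
    and r1: "(a * \<alpha>1 - z) / v \<le> r1" and rm: "rm \<le> (- a * \<alpha>1 - z) / v"
  shows "a / v * (\<alpha>1 - a * z + w * \<alpha>1 * \<rho>) \<le> z + r1 + w * (r1 - rm) * (Nm / (N1 + Nm))"
proof -
  have drift1: "a / v * (\<alpha>1 - a * z) \<le> z + r1"
  proof -
    have "z + (a * \<alpha>1 - z) / v = a / v * (\<alpha>1 - a * z)"
      using v(2) unfolding v(1) by (simp add: field_simps power2_eq_square)
    then show ?thesis
      using r1 by linarith
  qed
  have posterior: "\<rho> / 2 \<le> Nm / (N1 + Nm)"
  proof -
    have "\<rho> * Nm \<le> Nm"
      using \<rho>(2) N(2) by simp
    then have "\<rho> * (N1 + Nm) \<le> 2 * Nm"
      using \<rho>(3) by (simp add: distrib_left)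
    then show ?thesis
      using N by (simp add: field_simps)
  qed
  have gap: "2 * a * \<alpha>1 / v \<le> r1 - rm"
  proof -
    have "(a * \<alpha>1 - z) / v - (- a * \<alpha>1 - z) / v = 2 * a * \<alpha>1 / v"
      by (simp add: diff_divide_distrib)
    then show ?thesis
      using r1 rm by linarith
  qed
  have "0 \<le> 2 * a * \<alpha>1 / v"
    using a v(2) \<alpha>1 by simp
  then have "2 * a * \<alpha>1 / v * (\<rho> / 2) \<le> (r1 - rm) * (Nm / (N1 + Nm))"
    using gap \<rho>(1) by (intro mult_mono gap posterior) auto
  then have "w * (2 * a * \<alpha>1 / v * (\<rho> / 2)) \<le> w * (r1 - rm) * (Nm / (N1 + Nm))"
    unfolding mult.assoc using w by (rule mult_left_mono)
  moreover have "w * (2 * a * \<alpha>1 / v * (\<rho> / 2)) = a / v * (w * \<alpha>1 * \<rho>)"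
    by (simp add: field_simps)
  moreover have "a / v * (\<alpha>1 - a * z + w * \<alpha>1 * \<rho>) = a / v * (\<alpha>1 - a * z) + a / v * (w * \<alpha>1 * \<rho>)"
    by (rule distrib_left)
  ultimately show ?thesis
    using drift1 by linarith
qed

lemma guided_field_lower_bound:
  fixes p1 pm1 :: "real \<Rightarrow> real"
  assumes p1: "prob_density p1" and supp1: "\<forall>y. y \<notin> {\<alpha>1..\<alpha>2} \<longrightarrow> p1 y = 0"
    and pm1: "prob_density pm1" and suppm: "\<forall>y. y \<notin> {-\<alpha>2..-\<alpha>1} \<longrightarrow> pm1 y = 0"
    and \<alpha>: "0 < \<alpha>1" "\<alpha>1 < \<alpha>2" and w: "1 \<le> w" and \<alpha>2: "\<alpha>2\<^sup>2 \<le> ln w / 4"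
    and a_le: "exp (t - T) \<le> 1/2" and z: "z \<le> ln w / (16 * \<alpha>2)"
    and K: "0 \<le> \<alpha>1 + w * \<alpha>1 * exp (- ln w / 4) - ln w / (16 * \<alpha>2) / 2"
  shows "exp (t - T) * (\<alpha>1 + w * \<alpha>1 * exp (- ln w / 4) - ln w / (16 * \<alpha>2) / 2)
           \<le> guided_field p1 pm1 w T t z"
proof -
  define a \<sigma> L \<rho> where "a = sched_a T t" and "\<sigma> = sched_b T t"
    and "L = ln w / (16 * \<alpha>2)" and "\<rho> = exp (- ln w / 4)"
  have a: "0 < a" "a \<le> 1/2" and a2: "a\<^sup>2 \<le> 1/4"
    using a_le power_mono[OF a_le, of 2] by (auto simp: a_def sched_a_def power2_eq_square)
  have v: "\<sigma>\<^sup>2 = 1 - a\<^sup>2" and v34: "3/4 \<le> \<sigma>\<^sup>2" and \<sigma>: "0 < \<sigma>"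
    using a2 by (auto simp: \<sigma>_def sched_b_def a_def[symmetric])
  have lnw: "0 < ln w"
    using \<alpha> \<alpha>2 zero_less_power[of \<alpha>2 2] by linarith
  then have L: "0 < L" and \<rho>: "0 \<le> \<rho>" "\<rho> \<le> 1"
    using \<alpha> by (auto simp: L_def \<rho>_def)
  note noised = noised_density_eq_gauss_conv[of _ T t, folded a_def \<sigma>_def]
  note pos1 = gauss_conv_pos[OF p1 supp1 \<sigma>, of a z] and posm = gauss_conv_pos[OF pm1 suppm \<sigma>, of a z]
  have deriv: "(gauss_conv q \<sigma> a has_real_derivative deriv (gauss_conv q \<sigma> a) z) (at z)"
    if "prob_density q" for q
    using has_real_derivative_gauss_conv[OF prob_densityD(1)[OF that] \<sigma>] by (metis DERIV_imp_deriv)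
  have r1: "(a * \<alpha>1 - z) / \<sigma>\<^sup>2 \<le> deriv (gauss_conv p1 \<sigma> a) z / gauss_conv p1 \<sigma> a z"
    using deriv_gauss_conv_bounds(1)[OF p1 supp1 \<sigma>, where a=a and z=z] a pos1
    by (simp add: pos_le_divide_eq)
  have rm: "deriv (gauss_conv pm1 \<sigma> a) z / gauss_conv pm1 \<sigma> a z \<le> (- a * \<alpha>1 - z) / \<sigma>\<^sup>2"
    using deriv_gauss_conv_bounds(2)[OF pm1 suppm \<sigma>, where a=a and z=z] a posm
    by (simp add: pos_divide_le_eq)
  have "a * \<alpha>2 * (2 * L + a * \<alpha>2) / \<sigma>\<^sup>2 \<le> ln w / 4"
  proof -
    have "a * \<alpha>2 * (2 * L) \<le> 1/2 * (ln w / 8)"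
      using a \<alpha> lnw by (simp add: L_def field_simps)
    moreover have "a\<^sup>2 * \<alpha>2\<^sup>2 \<le> 1/4 * (ln w / 4)"
      using a2 \<alpha>2 by (intro mult_mono) auto
    ultimately have "a * \<alpha>2 * (2 * L + a * \<alpha>2) \<le> 3/4 * (ln w / 4)"
      using lnw by (simp add: algebra_simps power2_eq_square)
    also have "\<dots> \<le> \<sigma>\<^sup>2 * (ln w / 4)"
      using v34 lnw by (intro mult_right_mono) auto
    finally show ?thesis
      using \<sigma> by (simp add: pos_divide_le_eq mult.commute)
  qed
  then have "\<rho> \<le> exp (- (a * \<alpha>2 * (2 * L + a * \<alpha>2) / \<sigma>\<^sup>2))"
    unfolding \<rho>_def by simp
  then have "\<rho> * gauss_conv p1 \<sigma> a z \<le> exp (- (a * \<alpha>2 * (2 * L + a * \<alpha>2) / \<sigma>\<^sup>2)) * gauss_conv p1 \<sigma> a z"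
    using pos1 by (intro mult_right_mono) auto
  also have "\<dots> \<le> gauss_conv pm1 \<sigma> a z"
    by (rule gauss_conv_mirror_ratio_ge[OF p1 supp1 pm1 suppm _ \<sigma> _ z[folded L_def]]) (use \<alpha> a L in auto)
  finally have ratio: "\<rho> * gauss_conv p1 \<sigma> a z \<le> gauss_conv pm1 \<sigma> a z" .
  have "a / \<sigma>\<^sup>2 * (\<alpha>1 - a * z + w * \<alpha>1 * \<rho>) \<le> guided_field p1 pm1 w T t z"
    unfolding guided_field_eq_posterior_form[where T=T and t=t, unfolded noised, OF deriv[OF p1] deriv[OF pm1] pos1 posm]
    by (rule guided_drift_ge_of_score_bounds[OF a(1) v _ _ _ pos1 posm \<rho> ratio r1 rm]) (use \<sigma> \<alpha> w in auto)
  moreover have "a * z \<le> L / 2"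
    using mult_left_mono[OF z[folded L_def], of a] mult_right_mono[OF a(2), of L] a L by linarith
  then have "a / \<sigma>\<^sup>2 * (\<alpha>1 + w * \<alpha>1 * \<rho> - L / 2) \<le> a / \<sigma>\<^sup>2 * (\<alpha>1 - a * z + w * \<alpha>1 * \<rho>)"
    using a by (intro mult_left_mono) auto
  moreover have "a * (\<alpha>1 + w * \<alpha>1 * \<rho> - L / 2) \<le> a / \<sigma>\<^sup>2 * (\<alpha>1 + w * \<alpha>1 * \<rho> - L / 2)"
    using a v v34 \<sigma> K unfolding L_def \<rho>_def by (intro mult_right_mono) (auto simp: le_divide_eq)
  ultimately show ?thesis
    unfolding a_def sched_a_def L_def \<rho>_def by linarith
qed

lemma increment_le_of_derivative_le:
  fixes x g x' g' :: "real \<Rightarrow> real"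
  assumes "a \<le> b"
    and x: "\<And>t. t \<in> {a..b} \<Longrightarrow> (x has_real_derivative x' t) (at t within {a..b})"
    and g: "\<And>t. (g has_real_derivative g' t) (at t)"
    and le: "\<And>t. t \<in> {a..b} \<Longrightarrow> g' t \<le> x' t"
  shows "g b - g a \<le> x b - x a"
proof -
  have "x a - g a \<le> x b - g b"
  proof (rule DERIV_nonneg_imp_increasing_open[OF \<open>a \<le> b\<close>])
    fix t assume t: "a < t" "t < b"
    then have "(x has_real_derivative x' t) (at t)"
      using x[of t] by (simp add: at_within_Icc_at)
    then show "\<exists>y. ((\<lambda>t. x t - g t) has_real_derivative y) (at t) \<and> 0 \<le> y"
      using DERIV_diff[OF _ g] le[of t] t by fastforce
  next
    have "continuous_on {a..b} x"
      unfolding continuous_on_eq_continuous_within using x DERIV_continuous by blast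
    moreover have "continuous_on {a..b} g"
      using g by (intro continuous_at_imp_continuous_on ballI DERIV_isCont) blast
    ultimately show "continuous_on {a..b} (\<lambda>t. x t - g t)"
      by (rule continuous_on_diff)
  qed
  then show ?thesis
    by simp
qed

lemma guidance_parameter_bounds:
  fixes \<alpha>1 \<alpha>2 \<beta> w :: real
  assumes \<alpha>: "0 < \<alpha>1" "0 < \<alpha>2" and \<beta>: "1 \<le> \<beta>" and w: "1 \<le> w"
    and ratio: "ln w / \<alpha>2 \<le> sqrt w * \<alpha>1 / \<beta>"
  defines "L \<equiv> ln w / (16 * \<alpha>2)"
  defines "K \<equiv> \<alpha>1 + w * \<alpha>1 * exp (- ln w / 4) - L / 2"
  shows "0 \<le> K" and "L \<le> - (sqrt w * \<alpha>1 / (16 * \<beta>)) + K / 4"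
proof -
  define S where "S = sqrt w * \<alpha>1"
  have S: "0 < S"
    using \<alpha> w by (simp add: S_def)
  have S\<beta>: "S / (16 * \<beta>) \<le> S / 16"
    using S \<beta> divide_left_mono[of 16 "16 * \<beta>" S] by simp
  have "sqrt w = exp (ln w / 2)"
    using w by (simp add: powr_half_sqrt[symmetric] powr_def)
  also have "\<dots> \<le> exp (ln w - ln w / 4)"
    using ln_ge_zero[OF w] by (subst exp_le_cancel_iff) linarith
  also have "\<dots> = exp (ln w) * exp (- ln w / 4)"
    by (simp flip: exp_add)
  also have "\<dots> = w * exp (- ln w / 4)"
    using w by simp
  finally have "sqrt w * \<alpha>1 \<le> w * exp (- ln w / 4) * \<alpha>1"
    by (rule mult_right_mono) (use \<alpha> in simp)
  then have Y: "S \<le> w * \<alpha>1 * exp (- ln w / 4)"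
    by (simp add: S_def mult_ac)
  have LS: "L \<le> S / (16 * \<beta>)"
    using divide_right_mono[OF ratio, of 16] by (simp add: L_def S_def mult.commute)
  show "0 \<le> K"
    unfolding K_def using Y LS S S\<beta> \<alpha> by linarith
  have "K / 4 = \<alpha>1 / 4 + w * \<alpha>1 * exp (- ln w / 4) / 4 - L / 8"
    unfolding K_def by simp
  then show "L \<le> - (sqrt w * \<alpha>1 / (16 * \<beta>)) + K / 4"
    unfolding S_def[symmetric] using Y LS S S\<beta> \<alpha> by linarith
qed

lemma guided_flow_gain_below_threshold:
  fixes p1 pm1 x :: "real \<Rightarrow> real"
  assumes p1: "prob_density p1" "\<forall>y. y \<notin> {\<alpha>1..\<alpha>2} \<longrightarrow> p1 y = 0"
    and pm1: "prob_density pm1" "\<forall>y. y \<notin> {-\<alpha>2..-\<alpha>1} \<longrightarrow> pm1 y = 0"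
    and \<alpha>: "0 < \<alpha>1" "\<alpha>1 < \<alpha>2" and w: "1 \<le> w" "\<alpha>2\<^sup>2 \<le> ln w / 4"
    and flow: "\<forall>t \<in> {0..<T}. (x has_real_derivative guided_field p1 pm1 w T t (x t)) (at t within {0..<T})"
    and t1: "0 \<le> t1" "t1 < T" "exp (t1 - T) \<le> 1/2"
    and below: "\<And>t. t \<in> {0..t1} \<Longrightarrow> x t \<le> ln w / (16 * \<alpha>2)"
  defines "K \<equiv> \<alpha>1 + w * \<alpha>1 * exp (- ln w / 4) - ln w / (16 * \<alpha>2) / 2"
  assumes K: "0 \<le> K"
  shows "K * exp (t1 - T) - K * exp (- T) \<le> x t1 - x 0"
proof -
  have "K * exp (t1 - T) - K * exp (0 - T) \<le> x t1 - x 0"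
  proof (rule increment_le_of_derivative_le[where g="\<lambda>t. K * exp (t - T)" and g'="\<lambda>t. K * exp (t - T)"
        and x'="\<lambda>t. guided_field p1 pm1 w T t (x t)", OF t1(1)])
    fix t assume t: "t \<in> {0..t1}"
    have "(x has_real_derivative guided_field p1 pm1 w T t (x t)) (at t within {0..<T})"
      using flow t t1 by auto
    then show "(x has_real_derivative guided_field p1 pm1 w T t (x t)) (at t within {0..t1})"
      by (rule DERIV_subset) (use t1 in auto)
    have "exp (t - T) \<le> exp (t1 - T)"
      using t by simp
    then have "exp (t - T) \<le> 1/2"
      using t1(3) by linarith
    from guided_field_lower_bound[OF p1 pm1 \<alpha> w this below[OF t] K[unfolded K_def]]
    show "K * exp (t - T) \<le> guided_field p1 pm1 w T t (x t)"
      unfolding K_def by (simp only: mult.commute)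
  qed (auto intro!: derivative_eq_intros)
  then show ?thesis
    by simp
qed

lemma exp_neg_le_quarter:
  fixes T :: real
  assumes "2 * ln 2 \<le> T"
  shows "exp (- T) \<le> 1/4"
proof -
  have "exp (- T) \<le> exp (- (ln 2 + ln 2))"
    using assms by simp
  also have "\<dots> = 1/4"
    by (simp only: exp_minus exp_add) simp
  finally show ?thesis .
qed

theorem lemma3p3:
  fixes \<alpha>1 \<alpha>2 \<beta> w T :: real
    and p1 pm1 :: "real \<Rightarrow> real"
    and x :: "real \<Rightarrow> real"
  assumes "0 < \<alpha>1" and "\<alpha>1 < \<alpha>2" and "1 \<le> \<beta>"
    and "prob_density p1" and "\<forall>y. y \<notin> {\<alpha>1..\<alpha>2} \<longrightarrow> p1 y = 0"
    and "prob_density pm1" and "\<forall>y. y \<notin> {-\<alpha>2..-\<alpha>1} \<longrightarrow> pm1 y = 0"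
    and "\<forall>x1 \<in> {-\<alpha>2<..<-\<alpha>1}. \<forall>x2 \<in> {\<alpha>1<..<\<alpha>2}.
           1 / \<beta> \<le> pm1 x1 / p1 x2 \<and> pm1 x1 / p1 x2 \<le> \<beta>"
    and "1 \<le> w" and "2 * ln 2 \<le> T"
    and "\<alpha>2\<^sup>2 \<le> ln w / 4"
    and "\<alpha>1 * sqrt w \<ge> ln w"
    and "ln w / \<alpha>2 \<le> sqrt w * \<alpha>1 / \<beta>"
    and "\<forall>t \<in> {0..<T}. (x has_real_derivative guided_field p1 pm1 w T t (x t)) (at t within {0..<T})"
    and "x 0 \<ge> - (sqrt w * \<alpha>1 / (16 * \<beta>))"
  shows "\<exists>s0 \<in> {exp (-T)..1}. x (T + ln s0) \<ge> ln w / (16 * \<alpha>2)"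
proof (rule ccontr)
  define L K t1 where "L = ln w / (16 * \<alpha>2)" and "K = \<alpha>1 + w * \<alpha>1 * exp (- ln w / 4) - L / 2"
    and "t1 = T - ln 2"
  assume "\<not> ?thesis"
  then have all_below: "\<forall>s0 \<in> {exp (-T)..1}. x (T + ln s0) < L"
    by (auto simp: L_def not_le)
  have below: "x t < L" if "t \<in> {0..T}" for t
  proof -
    have "exp (t - T) \<in> {exp (-T)..1}"
      using that by auto
    from bspec[OF all_below this] show ?thesis
      by simp
  qed
  have K: "0 \<le> K" and x0: "L \<le> x 0 + K / 4"
    using guidance_parameter_bounds[of \<alpha>1 \<alpha>2 \<beta> w] assms(1-3,9,13,15) unfolding L_def K_def by auto
  have "0 < ln (2::real)"
    by simp
  then have t1: "0 \<le> t1" "t1 < T"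
    using assms(10) unfolding t1_def by linarith+
  have half: "exp (t1 - T) = 1/2"
    by (simp add: t1_def exp_minus)
  have "K * exp (t1 - T) - K * exp (- T) \<le> x t1 - x 0"
    unfolding K_def L_def
  proof (rule guided_flow_gain_below_threshold[OF assms(4-7,1,2,9,11,14) t1])
    show "x t \<le> ln w / (16 * \<alpha>2)" if "t \<in> {0..t1}" for t
      using below[of t] that t1 unfolding L_def by auto
  qed (use half K in \<open>simp_all add: K_def L_def\<close>)
  then have "x 0 + K / 4 \<le> x t1"
    using half mult_left_mono[OF exp_neg_le_quarter[OF assms(10)] K] by simp
  then show False
    using x0 below[of t1] t1 by simp
qed

end
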